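(* Let $q$ be an odd prime power, $\omega$ a non-square in $\mathbb F_q$, $\epsilon\in\mathbb F_{q^2}$ with $\epsilon^2=\omega$, and write $z=z_1+\epsilon z_2$ ($z_i\in\mathbb F_q$) for $z\in\mathbb F_{q^2}$. Let $\mathcal C: aX^2+bXY+cXZ+dYZ+eZ^2=0$ be a non-singular conic of $\mathrm{PG}(2,q^2)$ with $d=1$, $b\notin\mathbb F_q$, and $-bcd+ad^2+b^2e$ a nonzero square in $\mathbb F_{q^2}$. Put $A=-a_2b_1+a_1b_2$, $B=b_2c_1-b_1c_2-a_2d_1+a_1d_2$, $C=-c_2d_1+c_1d_2+b_2e_1-b_1e_2$, $D=d_2e_1-d_1e_2$, and let $\mathcal S\subset\mathrm{PG}(3,q)$ be the cubic surface in coordinates $(t_1:t_2:X:Z)$ with equation $$2t_1t_2(b_1X+d_1Z)-(t_1^2+\omega t_2^2)(b_2X+d_2Z)+AX^3+BX^2Z+CXZ^2+DZ^3=0.$$ Let $\mathcal S_q$ be the number of points of $\mathrm{PG}(3,q)$ on $\mathcal S$, and $n_0$, $n_\infty$ the numbers of those with $t_1=t_2=0$ and with $X=Z=0$ respectively. Then $E_q(\mathcal C)=\frac12(\mathcal S_q-n_0-n_\infty)$.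
   Context: $E_q(\mathcal C)$ is the number of points of $\mathrm{PG}(2,q)$ (canonically embedded in $\mathrm{PG}(2,q^2)$) which are external to $\mathcal C$, i.e. lie on two tangent lines of $\mathcal C$. *)

theory Defs
  imports Complex_Main "HOL-Computational_Algebra.Primes"
begin

text \<open>The big field is a finite field type 'a with CARD('a) = q^2; the subfield
F_q is the set of fixed points of the Frobenius x \<mapsto> x^q.\<close>

definition subfield_q :: "nat \<Rightarrow> ('a::field) set" where
  "subfield_q q = {x. x ^ q = x}"

definition comp1 :: "nat \<Rightarrow> 'a::field \<Rightarrow> 'a \<Rightarrow> 'a" where
  "comp1 q eps z = (THE z1. z1 \<in> subfield_q q \<and> (\<exists>z2 \<in> subfield_q q. z = z1 + eps * z2))"

definition comp2 :: "nat \<Rightarrow> 'a::field \<Rightarrow> 'a \<Rightarrow> 'a" where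
  "comp2 q eps z = (THE z2. z2 \<in> subfield_q q \<and> (\<exists>z1 \<in> subfield_q q. z = z1 + eps * z2))"

definition pclass3 :: "('a::field) set \<Rightarrow> 'a \<times> 'a \<times> 'a \<Rightarrow> ('a \<times> 'a \<times> 'a) set" where
  "pclass3 K v = (\<lambda>k. (k * fst v, k * fst (snd v), k * snd (snd v))) ` (K - {0})"

definition proj_plane :: "('a::field) set \<Rightarrow> ('a \<times> 'a \<times> 'a) set set" where
  "proj_plane K = {pclass3 K v | v. v \<in> K \<times> K \<times> K \<and> v \<noteq> (0, 0, 0)}"

definition pclass4 :: "('a::field) set \<Rightarrow> 'a \<times> 'a \<times> 'a \<times> 'a \<Rightarrow> ('a \<times> 'a \<times> 'a \<times> 'a) set" where
  "pclass4 K v = (\<lambda>k. (k * fst v, k * fst (snd v), k * fst (snd (snd v)), k * snd (snd (snd v)))) ` (K - {0})"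

definition proj_space3 :: "('a::field) set \<Rightarrow> ('a \<times> 'a \<times> 'a \<times> 'a) set set" where
  "proj_space3 K = {pclass4 K v | v. v \<in> K \<times> K \<times> K \<times> K \<and> v \<noteq> (0, 0, 0, 0)}"

text \<open>Lines of PG(2,F) are represented by their (dual) coordinate classes;
a point P lies on line L iff u1 x + u2 y + u3 z = 0.\<close>
definition incident :: "('a::field \<times> 'a \<times> 'a) set \<Rightarrow> ('a \<times> 'a \<times> 'a) set \<Rightarrow> bool" where
  "incident P L = (\<forall>v\<in>P. \<forall>u\<in>L. fst u * fst v + fst (snd u) * fst (snd v) + snd (snd u) * snd (snd v) = 0)"

definition conic_form :: "'a::field \<Rightarrow> 'a \<Rightarrow> 'a \<Rightarrow> 'a \<Rightarrow> 'a \<Rightarrow> 'a \<times> 'a \<times> 'a \<Rightarrow> 'a" where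
  "conic_form a b c d e v = (case v of (X, Y, Z) \<Rightarrow>
     a * X^2 + b * X * Y + c * X * Z + d * Y * Z + e * Z^2)"

text \<open>Non-singular: the Gram matrix [[2a,b,c],[b,0,d],[c,d,2e]] of the associated
bilinear form has nonzero determinant (odd characteristic).\<close>
definition conic_nonsingular :: "'a::field \<Rightarrow> 'a \<Rightarrow> 'a \<Rightarrow> 'a \<Rightarrow> 'a \<Rightarrow> bool" where
  "conic_nonsingular a b c d e =
     ((2*a) * (0 * (2*e) - d * d) - b * (b * (2*e) - d * c) + c * (b * d - 0 * c) \<noteq> 0)"

definition conic_points :: "'a::field \<Rightarrow> 'a \<Rightarrow> 'a \<Rightarrow> 'a \<Rightarrow> 'a \<Rightarrow> ('a \<times> 'a \<times> 'a) set set" where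
  "conic_points a b c d e = {P \<in> proj_plane UNIV. \<forall>v\<in>P. conic_form a b c d e v = 0}"

definition tangent_line :: "'a::field \<Rightarrow> 'a \<Rightarrow> 'a \<Rightarrow> 'a \<Rightarrow> 'a \<Rightarrow> ('a \<times> 'a \<times> 'a) set \<Rightarrow> bool" where
  "tangent_line a b c d e L = (L \<in> proj_plane UNIV \<and>
     card {P \<in> conic_points a b c d e. incident P L} = 1)"

definition E_q :: "nat \<Rightarrow> 'a::field \<Rightarrow> 'a \<Rightarrow> 'a \<Rightarrow> 'a \<Rightarrow> 'a \<Rightarrow> nat" where
  "E_q q a b c d e = card {P \<in> proj_plane (UNIV::'a set).
      (\<exists>v\<in>P. v \<in> subfield_q q \<times> subfield_q q \<times> subfield_q q) \<and>
      card {L. tangent_line a b c d e L \<and> incident P L} = 2}"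

definition surface_poly :: "nat \<Rightarrow> 'a::field \<Rightarrow> 'a \<Rightarrow> 'a \<Rightarrow> 'a \<Rightarrow> 'a \<Rightarrow> 'a \<Rightarrow> 'a \<Rightarrow>
    'a \<times> 'a \<times> 'a \<times> 'a \<Rightarrow> 'a" where
  "surface_poly q eps \<omega> a b c d e v = (case v of (t1, t2, X, Z) \<Rightarrow>
     (let a1 = comp1 q eps a; a2 = comp2 q eps a;
          b1 = comp1 q eps b; b2 = comp2 q eps b;
          c1 = comp1 q eps c; c2 = comp2 q eps c;
          d1 = comp1 q eps d; d2 = comp2 q eps d;
          e1 = comp1 q eps e; e2 = comp2 q eps e;
          A = - a2 * b1 + a1 * b2;
          B = b2 * c1 - b1 * c2 - a2 * d1 + a1 * d2;
          C = - c2 * d1 + c1 * d2 + b2 * e1 - b1 * e2;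
          D = d2 * e1 - d1 * e2
      in 2 * t1 * t2 * (b1 * X + d1 * Z) - (t1^2 + \<omega> * t2^2) * (b2 * X + d2 * Z)
         + A * X^3 + B * X^2 * Z + C * X * Z^2 + D * Z^3))"

definition surface_points :: "nat \<Rightarrow> 'a::field \<Rightarrow> 'a \<Rightarrow> 'a \<Rightarrow> 'a \<Rightarrow> 'a \<Rightarrow> 'a \<Rightarrow> 'a \<Rightarrow>
    ('a \<times> 'a \<times> 'a \<times> 'a) set set" where
  "surface_points q eps \<omega> a b c d e =
     {P \<in> proj_space3 (subfield_q q). \<forall>v\<in>P. surface_poly q eps \<omega> a b c d e v = 0}"

end

theory Submission
  imports Defs "HOL-Number_Theory.Residues"
begin

text \<open>
  Let Q be the quadratic form of the conic, M its Gram matrix and D the quadratic form of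
  -adj M. A line with coordinates u meets the conic in as many points as D u has square roots,
  so the tangents are the zeros of D; dually, the number of tangents through a point v is the
  number of square roots of the dual of D at v, which is -8 det M * Q v. The hypothesis on
  -bcd + ad^2 + b^2 e says that -8 det M is a nonzero square, so a point v of PG(2,q) is
  external iff Q v is a nonzero square of F_{q^2}.

  For (X, Z) not both 0 the equation Q (X, Y, Z) = s^2 is linear in Y with coefficient
  bX + Z, which is nonzero because b is not in F_q. Writing s = t1 + eps t2, the surface
  polynomial at (t1, t2, X, Z) is the eps-component of (s^2 - aX^2 - cXZ - eZ^2) (bX + Z)^q,
  so it vanishes iff the solution Y lies in F_q. Hence the F_q-points of the surface off the
  lines t1 = t2 = 0 and X = Z = 0 correspond two-to-one (through s and -s) to the points v of
  PG(2,q) with Q v a nonzero square; counting vectors on both sides gives the formula.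
\<close>

section \<open>Projective points as orbits of scalar multiplication\<close>

definition mult_inverse_closed :: "'a::field set \<Rightarrow> bool" where
  "mult_inverse_closed K \<longleftrightarrow> 1 \<in> K \<and> (\<forall>x\<in>K. \<forall>y\<in>K. x * y \<in> K) \<and> (\<forall>x\<in>K. inverse x \<in> K)"

lemma mult_inverse_closed_UNIV: "mult_inverse_closed UNIV"
  by (simp add: mult_inverse_closed_def)

lemma mult_inverse_closedD:
  assumes "mult_inverse_closed K"
  shows "1 \<in> K" and "x \<in> K \<Longrightarrow> y \<in> K \<Longrightarrow> x * y \<in> K" and "x \<in> K \<Longrightarrow> inverse x \<in> K"
  using assms unfolding mult_inverse_closed_def by blast+

locale projectivization =
  fixes smul :: "'a::field \<Rightarrow> 'v \<Rightarrow> 'v"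
  assumes smul_one: "smul 1 v = v"
    and smul_smul: "smul k (smul l v) = smul (k * l) v"
begin

definition orbit :: "'a set \<Rightarrow> 'v \<Rightarrow> 'v set" where
  "orbit K v = (\<lambda>k. smul k v) ` (K - {0})"

lemma orbit_self: "mult_inverse_closed K \<Longrightarrow> v \<in> orbit K v"
  unfolding orbit_def mult_inverse_closed_def by (metis DiffI image_eqI singletonD smul_one zero_neq_one)

lemma orbit_eq:
  assumes K: "mult_inverse_closed K" and w: "w \<in> orbit K v"
  shows "orbit K w = orbit K v"
proof -
  obtain k where k: "k \<in> K - {0}" "w = smul k v"
    using w unfolding orbit_def by blast
  have "smul l w \<in> orbit K v" if "l \<in> K - {0}" for l
  proof -
    have "l * k \<in> K - {0}"
      using K k that unfolding mult_inverse_closed_def by auto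
    then show ?thesis
      unfolding orbit_def k(2) smul_smul by blast
  qed
  moreover have "smul l v \<in> orbit K w" if "l \<in> K - {0}" for l
  proof -
    have "l * inverse k \<in> K - {0}"
      using K k that unfolding mult_inverse_closed_def by auto
    moreover have "smul l v = smul (l * inverse k) w"
      using k by (simp add: smul_smul mult.assoc)
    ultimately show ?thesis
      unfolding orbit_def by blast
  qed
  ultimately show ?thesis
    unfolding orbit_def by blast
qed

lemma orbit_all_iff:
  assumes K: "mult_inverse_closed K" and \<phi>: "\<And>k v. k \<in> K - {0} \<Longrightarrow> \<phi> (smul k v) \<longleftrightarrow> \<phi> v"
  shows "(\<forall>w\<in>orbit K v. \<phi> w) \<longleftrightarrow> \<phi> v"
  using orbit_self[OF K] \<phi> unfolding orbit_def by auto

lemma orbits_filter: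
  assumes "mult_inverse_closed K" and "\<And>k v. k \<in> K - {0} \<Longrightarrow> \<phi> (smul k v) \<longleftrightarrow> \<phi> v"
  shows "{P \<in> orbit K ` V. \<forall>w\<in>P. \<phi> w} = orbit K ` {v \<in> V. \<phi> v}"
  using orbit_all_iff[OF assms] by auto

lemma card_orbits:
  fixes V :: "'v set"
  assumes K: "mult_inverse_closed K" and V: "finite V"
    and closed: "\<And>k v. k \<in> K - {0} \<Longrightarrow> v \<in> V \<Longrightarrow> smul k v \<in> V"
    and free: "\<And>k l v. v \<in> V \<Longrightarrow> smul k v = smul l v \<Longrightarrow> k = l"
    and \<phi>: "\<And>k v. k \<in> K - {0} \<Longrightarrow> \<phi> (smul k v) \<longleftrightarrow> \<phi> v"
  shows "card (K - {0}) * card {P \<in> orbit K ` V. \<forall>w\<in>P. \<phi> w} = card {v \<in> V. \<phi> v}"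
proof -
  let ?S = "{v \<in> V. \<phi> v}"
  have "card (K - {0}) * card (orbit K ` ?S) = card (\<Union> (orbit K ` ?S))"
  proof (rule card_partition)
    show "finite (\<Union> (orbit K ` ?S))"
      using V closed unfolding orbit_def by (auto intro: finite_subset[of _ V])
    show "card P = card (K - {0})" if "P \<in> orbit K ` ?S" for P
      using that free unfolding orbit_def by (auto intro!: card_image inj_onI)
    show "P1 \<inter> P2 = {}" if "P1 \<in> orbit K ` ?S" "P2 \<in> orbit K ` ?S" "P1 \<noteq> P2" for P1 P2
      using that orbit_eq[OF K] by blast
  qed (use V in simp)
  moreover have "\<Union> (orbit K ` ?S) = ?S"
    using orbit_self[OF K] closed \<phi> unfolding orbit_def by blast
  ultimately show ?thesis
    using orbits_filter[OF K \<phi>] by simp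
qed

end

definition scale3 :: "'a::times \<Rightarrow> 'a \<times> 'a \<times> 'a \<Rightarrow> 'a \<times> 'a \<times> 'a" where
  "scale3 k v = (k * fst v, k * fst (snd v), k * snd (snd v))"

definition scale4 :: "'a::times \<Rightarrow> 'a \<times> 'a \<times> 'a \<times> 'a \<Rightarrow> 'a \<times> 'a \<times> 'a \<times> 'a" where
  "scale4 k v = (k * fst v, k * fst (snd v), k * fst (snd (snd v)), k * snd (snd (snd v)))"

interpretation plane: projectivization "scale3 :: 'a::field \<Rightarrow> _"
  by unfold_locales (simp_all add: scale3_def mult.assoc)

interpretation space: projectivization "scale4 :: 'a::field \<Rightarrow> _"
  by unfold_locales (simp_all add: scale4_def mult.assoc)

lemma pclass3_eq_orbit: "pclass3 = plane.orbit"
  unfolding fun_eq_iff pclass3_def plane.orbit_def scale3_def by simp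

lemma pclass4_eq_orbit: "pclass4 = space.orbit"
  unfolding fun_eq_iff pclass4_def space.orbit_def scale4_def by simp

lemma proj_plane_orbits: "proj_plane K = plane.orbit K ` (K \<times> K \<times> K - {(0, 0, 0)})"
  unfolding proj_plane_def pclass3_eq_orbit by blast

lemma proj_planeE:
  assumes "P \<in> proj_plane K"
  obtains v where "v \<in> K \<times> K \<times> K" "v \<noteq> (0, 0, 0)" "P = pclass3 K v"
  using assms unfolding proj_plane_def by blast

lemma pclass3_in_proj_plane: "v \<in> K \<times> K \<times> K \<Longrightarrow> v \<noteq> (0, 0, 0) \<Longrightarrow> pclass3 K v \<in> proj_plane K"
  unfolding proj_plane_def by blast

lemma proj_space3E:
  assumes "P \<in> proj_space3 K"
  obtains v where "v \<in> K \<times> K \<times> K \<times> K" "v \<noteq> (0, 0, 0, 0)" "P = pclass4 K v"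
  using assms unfolding proj_space3_def by blast

lemma proj_space3_orbits: "proj_space3 K = space.orbit K ` (K \<times> K \<times> K \<times> K - {(0, 0, 0, 0)})"
  unfolding proj_space3_def pclass4_eq_orbit by blast

lemma card_proj_plane_points:
  fixes K :: "'a::{finite,field} set"
  assumes K: "mult_inverse_closed K" and \<phi>: "\<And>k v. k \<in> K - {0} \<Longrightarrow> \<phi> (scale3 k v) \<longleftrightarrow> \<phi> v"
  shows "card (K - {0}) * card {P \<in> proj_plane K. \<forall>v\<in>P. \<phi> v} = card {v \<in> K \<times> K \<times> K - {(0, 0, 0)}. \<phi> v}"
  unfolding proj_plane_orbits
proof (rule plane.card_orbits[OF K _ _ _ \<phi>])
  show "scale3 k v \<in> K \<times> K \<times> K - {(0, 0, 0)}" if "k \<in> K - {0}" "v \<in> K \<times> K \<times> K - {(0, 0, 0)}" for k v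
    using K that unfolding mult_inverse_closed_def scale3_def by auto
  show "k = l" if "v \<in> K \<times> K \<times> K - {(0, 0, 0)}" "scale3 k v = scale3 l v" for k l v
    using that unfolding scale3_def by auto
qed simp

lemma card_proj_space3_points:
  fixes K :: "'a::{finite,field} set"
  assumes K: "mult_inverse_closed K" and \<phi>: "\<And>k v. k \<in> K - {0} \<Longrightarrow> \<phi> (scale4 k v) \<longleftrightarrow> \<phi> v"
  shows "card (K - {0}) * card {P \<in> proj_space3 K. \<forall>v\<in>P. \<phi> v}
    = card {v \<in> K \<times> K \<times> K \<times> K - {(0, 0, 0, 0)}. \<phi> v}"
  unfolding proj_space3_orbits
proof (rule space.card_orbits[OF K _ _ _ \<phi>])
  show "scale4 k v \<in> K \<times> K \<times> K \<times> K - {(0, 0, 0, 0)}"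
    if "k \<in> K - {0}" "v \<in> K \<times> K \<times> K \<times> K - {(0, 0, 0, 0)}" for k v
    using K that unfolding mult_inverse_closed_def scale4_def by auto
  show "k = l" if "v \<in> K \<times> K \<times> K \<times> K - {(0, 0, 0, 0)}" "scale4 k v = scale4 l v" for k l v
    using that unfolding scale4_def by auto
qed simp

lemma card_nonzero_pos: "mult_inverse_closed K \<Longrightarrow> finite K \<Longrightarrow> 0 < card (K - {0::'a::field})"
  using mult_inverse_closedD(1) by (metis DiffI card_gt_0_iff finite_Diff empty_iff one_neq_zero singletonD)

lemma scale3_eq_0_iff: "scale3 (k::'a::field) v = (0, 0, 0) \<longleftrightarrow> k = 0 \<or> v = (0, 0, 0)"
  by (cases v) (auto simp: scale3_def)

lemma orbit_UNIV_Int: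
  assumes K: "mult_inverse_closed K" and v: "v \<in> K \<times> K \<times> K - {(0, 0, 0)}"
  shows "plane.orbit UNIV v \<inter> K \<times> K \<times> K = plane.orbit K v"
proof (intro equalityI subsetI)
  fix w assume "w \<in> plane.orbit UNIV v \<inter> K \<times> K \<times> K"
  then have w: "w \<in> plane.orbit UNIV v" "w \<in> K \<times> K \<times> K"
    by simp_all
  then obtain k where k: "k \<noteq> 0" "w = scale3 k v"
    unfolding plane.orbit_def by auto
  obtain v1 v2 v3 where v123: "v = (v1, v2, v3)"
    by (cases v)
  have kv: "k * v1 \<in> K" "k * v2 \<in> K" "k * v3 \<in> K"
    using w(2) unfolding k(2) v123 scale3_def by simp_all
  have k_in: "k \<in> K" if "vi \<in> K" "vi \<noteq> 0" "k * vi \<in> K" for vi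
  proof -
    have "k = (k * vi) * inverse vi"
      using that(2) by simp
    also have "\<dots> \<in> K"
      using mult_inverse_closedD(2,3)[OF K] that by blast
    finally show ?thesis .
  qed
  have "v1 \<noteq> 0 \<or> v2 \<noteq> 0 \<or> v3 \<noteq> 0" "v1 \<in> K" "v2 \<in> K" "v3 \<in> K"
    using v unfolding v123 by auto
  then have "k \<in> K"
    using kv k_in by blast
  with k show "w \<in> plane.orbit K v"
    unfolding plane.orbit_def by blast
next
  fix w assume "w \<in> plane.orbit K v"
  then obtain k where k: "k \<in> K - {0}" "w = scale3 k v"
    unfolding plane.orbit_def by blast
  then have "w \<in> K \<times> K \<times> K"
    using v mult_inverse_closedD(2)[OF K] unfolding scale3_def by auto
  with k show "w \<in> plane.orbit UNIV v \<inter> K \<times> K \<times> K"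
    unfolding plane.orbit_def by blast
qed

lemma card_rational_points:
  fixes K :: "'a::{finite,field} set"
  assumes K: "mult_inverse_closed K" and \<phi>: "\<And>k v. k \<noteq> 0 \<Longrightarrow> \<phi> (scale3 k v) \<longleftrightarrow> \<phi> v"
  shows "card {P \<in> proj_plane UNIV. (\<exists>v\<in>P. v \<in> K \<times> K \<times> K) \<and> (\<forall>v\<in>P. \<phi> v)}
    = card {P \<in> proj_plane K. \<forall>v\<in>P. \<phi> v}"
proof -
  let ?S = "{v \<in> K \<times> K \<times> K - {(0, 0, 0)}. \<phi> v}"
  have all_iff: "(\<forall>w\<in>plane.orbit L v. \<phi> w) \<longleftrightarrow> \<phi> v" if "mult_inverse_closed L" for L v
    using plane.orbit_all_iff[OF that] \<phi> by blast
  have "{P \<in> proj_plane UNIV. (\<exists>v\<in>P. v \<in> K \<times> K \<times> K) \<and> (\<forall>v\<in>P. \<phi> v)} = plane.orbit UNIV ` ?S"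
  proof (intro equalityI subsetI)
    fix P assume "P \<in> {P \<in> proj_plane UNIV. (\<exists>v\<in>P. v \<in> K \<times> K \<times> K) \<and> (\<forall>v\<in>P. \<phi> v)}"
    then obtain x v where x: "x \<noteq> (0, 0, 0)" "P = plane.orbit UNIV x"
      and v: "v \<in> P" "v \<in> K \<times> K \<times> K" "\<phi> v"
      unfolding proj_plane_orbits by blast
    have "v \<noteq> (0, 0, 0)"
      using v(1) x unfolding plane.orbit_def by (auto simp: scale3_eq_0_iff)
    moreover have "P = plane.orbit UNIV v"
      using plane.orbit_eq[OF mult_inverse_closed_UNIV] v(1) x(2) by blast
    ultimately show "P \<in> plane.orbit UNIV ` ?S"
      using v by blast
  next
    fix P assume "P \<in> plane.orbit UNIV ` ?S"
    then obtain v where v: "v \<in> ?S" "P = plane.orbit UNIV v"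
      by blast
    then show "P \<in> {P \<in> proj_plane UNIV. (\<exists>v\<in>P. v \<in> K \<times> K \<times> K) \<and> (\<forall>v\<in>P. \<phi> v)}"
      using plane.orbit_self[OF mult_inverse_closed_UNIV, of v] all_iff[OF mult_inverse_closed_UNIV, of v]
      unfolding proj_plane_orbits by blast
  qed
  moreover have "{P \<in> proj_plane K. \<forall>v\<in>P. \<phi> v} = plane.orbit K ` ?S"
    unfolding proj_plane_orbits using all_iff[OF K] by auto
  moreover have "inj_on (\<lambda>P. P \<inter> K \<times> K \<times> K) (plane.orbit UNIV ` ?S)"
  proof (rule inj_onI)
    fix P1 P2 assume P: "P1 \<in> plane.orbit UNIV ` ?S" "P2 \<in> plane.orbit UNIV ` ?S"
      and eq: "P1 \<inter> K \<times> K \<times> K = P2 \<inter> K \<times> K \<times> K"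
    obtain v1 v2 where v: "v1 \<in> ?S" "P1 = plane.orbit UNIV v1" "v2 \<in> ?S" "P2 = plane.orbit UNIV v2"
      using P by blast
    then have "v1 \<in> P2"
      using eq plane.orbit_self[OF mult_inverse_closed_UNIV, of v1] by blast
    then show "P1 = P2"
      using v plane.orbit_eq[OF mult_inverse_closed_UNIV] by metis
  qed
  moreover have "(\<lambda>P. P \<inter> K \<times> K \<times> K) ` plane.orbit UNIV ` ?S = plane.orbit K ` ?S"
    using orbit_UNIV_Int[OF K] by (auto simp: image_image)
  ultimately show ?thesis
    using card_image by fastforce
qed

section \<open>Square roots and binary quadratic forms\<close>

definition num_sqrts :: "'a::field \<Rightarrow> nat" where
  "num_sqrts D = card {s. s ^ 2 = D}"

lemma num_sqrts_cases:
  fixes D :: "'a::{finite,field}"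
  assumes two: "(2::'a) \<noteq> 0"
  shows "num_sqrts D = (if D = 0 then 1 else if \<exists>s. s ^ 2 = D then 2 else 0)"
proof -
  have "card {s. s ^ 2 = D} = 2" if "s ^ 2 = D" "D \<noteq> 0" for s
  proof -
    have "s \<noteq> 0"
      using that by auto
    then have "s \<noteq> - s"
      using two by (metis add_eq_0_iff2 mult_2 mult_eq_0_iff)
    moreover have "{s. s ^ 2 = D} = {s, - s}"
      using that by (auto simp: power2_eq_iff)
    ultimately show ?thesis
      by simp
  qed
  then show ?thesis
    unfolding num_sqrts_def by auto
qed

lemma num_sqrts_eq_1_iff: "(2::'a::{finite,field}) \<noteq> 0 \<Longrightarrow> num_sqrts (D::'a) = 1 \<longleftrightarrow> D = 0"
  by (simp add: num_sqrts_cases)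

lemma num_sqrts_eq_2_iff:
  "(2::'a::{finite,field}) \<noteq> 0 \<Longrightarrow> num_sqrts (D::'a) = 2 \<longleftrightarrow> (\<exists>s. s \<noteq> 0 \<and> s ^ 2 = D)"
  by (auto simp: num_sqrts_cases)

lemma num_sqrts_mult_square:
  assumes "c \<noteq> 0"
  shows "num_sqrts (c ^ 2 * D) = num_sqrts D"
  unfolding num_sqrts_def
proof (rule bij_betw_same_card[symmetric])
  show "bij_betw (\<lambda>s. c * s) {s. s ^ 2 = D} {s. s ^ 2 = c ^ 2 * D}"
    by (rule bij_betwI[where g = "\<lambda>s. s / c"]) (use assms in \<open>auto simp: power_mult_distrib power_divide\<close>)
qed

lemma card_quadratic_roots:
  fixes \<alpha> \<beta> \<gamma> :: "'a::field"
  assumes two: "(2::'a) \<noteq> 0" and \<alpha>: "\<alpha> \<noteq> 0"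
  shows "card {l. \<alpha> * l ^ 2 + \<beta> * l + \<gamma> = 0} = num_sqrts (\<beta> ^ 2 - 4 * \<alpha> * \<gamma>)"
  unfolding num_sqrts_def
proof (rule bij_betw_same_card)
  have completed_square:
    "(2 * \<alpha> * l + \<beta>) ^ 2 = 4 * \<alpha> * (\<alpha> * l ^ 2 + \<beta> * l + \<gamma>) + (\<beta> ^ 2 - 4 * \<alpha> * \<gamma>)" for l
    by (simp add: algebra_simps power2_eq_square)
  have "4 * \<alpha> \<noteq> 0"
    using two \<alpha> by (metis mult_2 mult_eq_0_iff numeral_Bit0)
  then have root_iff: "\<alpha> * l ^ 2 + \<beta> * l + \<gamma> = 0 \<longleftrightarrow> (2 * \<alpha> * l + \<beta>) ^ 2 = \<beta> ^ 2 - 4 * \<alpha> * \<gamma>" for l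
    unfolding completed_square by simp
  have inverse: "2 * \<alpha> * ((s - \<beta>) / (2 * \<alpha>)) + \<beta> = s" for s
    using two \<alpha> by simp
  show "bij_betw (\<lambda>l. 2 * \<alpha> * l + \<beta>) {l. \<alpha> * l ^ 2 + \<beta> * l + \<gamma> = 0}
      {s. s ^ 2 = \<beta> ^ 2 - 4 * \<alpha> * \<gamma>}"
  proof (rule bij_betwI[where g = "\<lambda>s. (s - \<beta>) / (2 * \<alpha>)"])
    show "(\<lambda>s. (s - \<beta>) / (2 * \<alpha>)) \<in> {s. s ^ 2 = \<beta> ^ 2 - 4 * \<alpha> * \<gamma>} \<rightarrow> {l. \<alpha> * l ^ 2 + \<beta> * l + \<gamma> = 0}"
      using root_iff inverse by simp
    show "(2 * \<alpha> * l + \<beta> - \<beta>) / (2 * \<alpha>) = l" for l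
      using two \<alpha> by simp
  qed (use root_iff inverse in simp_all)
qed

lemma card_binary_form_zeros_leading:
  fixes \<alpha> \<beta> \<gamma> :: "'a::{finite,field}"
  assumes two: "(2::'a) \<noteq> 0" and \<alpha>: "\<alpha> \<noteq> 0"
  shows "card {(s, r). (s, r) \<noteq> (0, 0) \<and> \<alpha> * s ^ 2 + \<beta> * s * r + \<gamma> * r ^ 2 = 0}
    = (card (UNIV :: 'a set) - 1) * num_sqrts (\<beta> ^ 2 - 4 * \<alpha> * \<gamma>)"
proof -
  let ?R = "{l. \<alpha> * l ^ 2 + \<beta> * l + \<gamma> = 0}"
  have dehomogenize: "\<alpha> * (l * r) ^ 2 + \<beta> * (l * r) * r + \<gamma> * r ^ 2 = r ^ 2 * (\<alpha> * l ^ 2 + \<beta> * l + \<gamma>)" for l r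
    by (simp add: algebra_simps power2_eq_square)
  have "{(s, r). (s, r) \<noteq> (0, 0) \<and> \<alpha> * s ^ 2 + \<beta> * s * r + \<gamma> * r ^ 2 = 0}
      = (\<lambda>(l, r). (l * r, r)) ` (?R \<times> (UNIV - {0}))"
  proof (intro equalityI subsetI)
    fix x assume "x \<in> {(s, r). (s, r) \<noteq> (0, 0) \<and> \<alpha> * s ^ 2 + \<beta> * s * r + \<gamma> * r ^ 2 = 0}"
    then obtain s r where x: "x = (s, r)" "(s, r) \<noteq> (0, 0)" "\<alpha> * s ^ 2 + \<beta> * s * r + \<gamma> * r ^ 2 = 0"
      by blast
    have "r \<noteq> 0"
      using x \<alpha> by auto
    then have "s / r \<in> ?R"
      using x(3) dehomogenize[of "s / r" r] by simp
    with \<open>r \<noteq> 0\<close> show "x \<in> (\<lambda>(l, r). (l * r, r)) ` (?R \<times> (UNIV - {0}))"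
      unfolding x(1) by (intro image_eqI[of _ _ "(s / r, r)"]) auto
  qed (auto simp: dehomogenize)
  moreover have "inj_on (\<lambda>(l, r). (l * r, r)) (?R \<times> (UNIV - {0}))"
    by (rule inj_onI) auto
  ultimately have "card {(s, r). (s, r) \<noteq> (0, 0) \<and> \<alpha> * s ^ 2 + \<beta> * s * r + \<gamma> * r ^ 2 = 0}
      = card ?R * (card (UNIV :: 'a set) - 1)"
    by (simp add: card_image card_cartesian_product card_Diff_subset)
  then show ?thesis
    unfolding card_quadratic_roots[OF two \<alpha>] by (simp only: mult.commute)
qed

lemma card_binary_form_zeros:
  fixes \<alpha> \<beta> \<gamma> :: "'a::{finite,field}"
  assumes two: "(2::'a) \<noteq> 0" and nonzero: "\<alpha> \<noteq> 0 \<or> \<beta> \<noteq> 0 \<or> \<gamma> \<noteq> 0"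
  shows "card {(s, r). (s, r) \<noteq> (0, 0) \<and> \<alpha> * s ^ 2 + \<beta> * s * r + \<gamma> * r ^ 2 = 0}
    = (card (UNIV :: 'a set) - 1) * num_sqrts (\<beta> ^ 2 - 4 * \<alpha> * \<gamma>)"
proof -
  consider "\<alpha> \<noteq> 0" | "\<alpha> = 0" "\<gamma> \<noteq> 0" | "\<alpha> = 0" "\<gamma> = 0" "\<beta> \<noteq> 0"
    using nonzero by blast
  then show ?thesis
  proof cases
    case 1
    then show ?thesis
      by (rule card_binary_form_zeros_leading[OF two])
  next
    case 2
    let ?Z = "\<lambda>\<alpha> \<gamma>. {(s, r). (s, r) \<noteq> (0, 0) \<and> \<alpha> * s ^ 2 + \<beta> * s * r + \<gamma> * r ^ 2 = (0::'a)}"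
    have "?Z \<alpha> \<gamma> = prod.swap ` ?Z \<gamma> \<alpha>"
      by (auto simp: image_iff algebra_simps)
    then have "card (?Z \<alpha> \<gamma>) = card (?Z \<gamma> \<alpha>)"
      by (simp add: card_image)
    also have "\<dots> = (card (UNIV :: 'a set) - 1) * num_sqrts (\<beta> ^ 2 - 4 * \<gamma> * \<alpha>)"
      using card_binary_form_zeros_leading[OF two 2(2)] .
    also have "\<beta> ^ 2 - 4 * \<gamma> * \<alpha> = \<beta> ^ 2 - 4 * \<alpha> * \<gamma>"
      by (simp add: algebra_simps)
    finally show ?thesis .
  next
    case 3
    then have "{(s, r). (s, r) \<noteq> (0, 0) \<and> \<alpha> * s ^ 2 + \<beta> * s * r + \<gamma> * r ^ 2 = 0}
        = (\<lambda>s. (s, 0)) ` (UNIV - {0}) \<union> (\<lambda>r. (0, r)) ` (UNIV - {0})"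
      by auto
    moreover have "card ((\<lambda>s. (s, 0::'a)) ` (UNIV - {0}) \<union> (\<lambda>r. (0::'a, r)) ` (UNIV - {0}))
        = 2 * (card (UNIV :: 'a set) - 1)"
      by (subst card_Un_disjoint) (auto simp: card_image card_Diff_subset inj_on_def)
    moreover have "num_sqrts (\<beta> ^ 2) = 2"
      using 3 two by (auto simp: num_sqrts_eq_2_iff)
    ultimately show ?thesis
      using 3 by simp
  qed
qed

section \<open>Ternary quadratic forms\<close>

definition dot3 :: "'a::comm_ring \<times> 'a \<times> 'a \<Rightarrow> 'a \<times> 'a \<times> 'a \<Rightarrow> 'a" where
  "dot3 = (\<lambda>(u1, u2, u3) (x1, x2, x3). u1 * x1 + u2 * x2 + u3 * x3)"

definition cross3 :: "'a::comm_ring \<times> 'a \<times> 'a \<Rightarrow> 'a \<times> 'a \<times> 'a \<Rightarrow> 'a \<times> 'a \<times> 'a" where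
  "cross3 = (\<lambda>(a1, a2, a3) (b1, b2, b3). (a2 * b3 - a3 * b2, a3 * b1 - a1 * b3, a1 * b2 - a2 * b1))"

definition lincomb3 :: "'a::comm_ring \<Rightarrow> 'a \<times> 'a \<times> 'a \<Rightarrow> 'a \<Rightarrow> 'a \<times> 'a \<times> 'a \<Rightarrow> 'a \<times> 'a \<times> 'a" where
  "lincomb3 s w r v = (s * fst w + r * fst v, s * fst (snd w) + r * fst (snd v), s * snd (snd w) + r * snd (snd v))"

lemma dot3_commute: "dot3 u x = dot3 x u"
  unfolding dot3_def split_def by (simp add: mult.commute)

lemma dot3_scale3_left: "dot3 (scale3 k u) x = k * dot3 u x"
  and dot3_scale3_right: "dot3 u (scale3 k x) = k * dot3 u x"
  unfolding dot3_def scale3_def split_def by (simp_all add: algebra_simps)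

lemma dot3_lincomb3: "dot3 u (lincomb3 s w r v) = s * dot3 u w + r * dot3 u v"
  unfolding dot3_def lincomb3_def split_def by (simp add: algebra_simps)

lemma dot3_cross3_self: "dot3 (cross3 w v) w = 0" "dot3 (cross3 w v) v = 0"
  unfolding dot3_def cross3_def split_def by (simp_all add: algebra_simps)

lemma cross3_lincomb3:
  "cross3 (lincomb3 s w r v) v = scale3 s (cross3 w v)"
  "cross3 w (lincomb3 s w r v) = scale3 r (cross3 w v)"
  unfolding cross3_def lincomb3_def scale3_def split_def by (simp_all add: algebra_simps)

lemma cramer3:
  fixes w v x e :: "'a::idom \<times> 'a \<times> 'a"
  assumes "dot3 (cross3 w v) x = 0"
  shows "scale3 (dot3 (cross3 w v) e) x = lincomb3 (dot3 (cross3 x v) e) w (dot3 (cross3 w x) e) v"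
  using assms unfolding dot3_def cross3_def lincomb3_def scale3_def split_def
  \<comment> \<open>HOL-Algebra rebinds the method name algebra; this is the Groebner basis method of HOL.\<close>
  by (simp add: prod_eq_iff) (intro conjI; Groebner_Basis.algebra)

lemma cross3_surj: "\<exists>w v. cross3 w v = (u::'a::field \<times> 'a \<times> 'a)"
proof (cases u)
  case (fields u1 u2 u3)
  show ?thesis
  proof (cases "u1 = 0")
    case True
    then have "cross3 (1, 0, 0) (0, u3, - u2) = u"
      by (simp add: cross3_def fields)
    then show ?thesis by blast
  next
    case False
    then have "cross3 (- u2 / u1, 1, 0) (- u3, 0, u1) = u"
      by (simp add: cross3_def fields)
    then show ?thesis by blast
  qed
qed

lemma dot3_nonzero_exists:
  assumes "u \<noteq> (0, 0, 0)"
  shows "\<exists>e. dot3 u (e::'a::comm_ring_1 \<times> 'a \<times> 'a) \<noteq> 0"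
proof -
  have "dot3 u (1, 0, 0) = fst u" "dot3 u (0, 1, 0) = fst (snd u)" "dot3 u (0, 0, 1) = snd (snd u)"
    unfolding dot3_def split_def by simp_all
  then show ?thesis
    using assms by (metis prod.collapse)
qed

lemma line_parametrization:
  fixes w v :: "'a::field \<times> 'a \<times> 'a"
  assumes u: "cross3 w v = u" "u \<noteq> (0, 0, 0)"
  shows "bij_betw (\<lambda>(s, r). lincomb3 s w r v) (UNIV - {(0, 0)}) {x. x \<noteq> (0, 0, 0) \<and> dot3 u x = 0}"
proof -
  let ?f = "\<lambda>(s, r). lincomb3 s w r v"
  have scale3_cancel: "scale3 s u = scale3 s' u \<longleftrightarrow> s = s'" for s s'
    using u(2) by (cases u) (auto simp: scale3_def)
  have coordinates: "cross3 (lincomb3 s w r v) v = scale3 s u" "cross3 w (lincomb3 s w r v) = scale3 r u" for s r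
    unfolding u(1)[symmetric] by (rule cross3_lincomb3)+
  have coefficients_unique: "lincomb3 s w r v = lincomb3 s' w r' v \<Longrightarrow> s = s' \<and> r = r'" for s r s' r'
    using coordinates[of s r] coordinates[of s' r'] scale3_cancel by metis
  have zero: "lincomb3 0 w 0 v = (0, 0, 0)"
    by (simp add: lincomb3_def)
  have "?f ` (UNIV - {(0, 0)}) = {x. x \<noteq> (0, 0, 0) \<and> dot3 u x = 0}"
  proof (intro equalityI subsetI)
    fix x assume "x \<in> ?f ` (UNIV - {(0, 0)})"
    then obtain s r where "(s, r) \<noteq> (0, 0)" "x = lincomb3 s w r v"
      by auto
    then show "x \<in> {x. x \<noteq> (0, 0, 0) \<and> dot3 u x = 0}"
      using coefficients_unique[of s r 0 0] zero u(1) by (auto simp: dot3_lincomb3 dot3_cross3_self)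
  next
    fix x assume x: "x \<in> {x. x \<noteq> (0, 0, 0) \<and> dot3 u x = 0}"
    obtain e where e: "dot3 u e \<noteq> 0"
      using dot3_nonzero_exists[OF u(2)] by blast
    let ?s = "dot3 (cross3 x v) e / dot3 u e" and ?r = "dot3 (cross3 w x) e / dot3 u e"
    have "scale3 (dot3 u e) x = lincomb3 (dot3 (cross3 x v) e) w (dot3 (cross3 w x) e) v"
      using cramer3[of w v x e] x u(1) by simp
    then have "x = lincomb3 ?s w ?r v"
      using e by (simp add: scale3_def lincomb3_def prod_eq_iff field_simps)
    moreover have "(?s, ?r) \<noteq> (0, 0)"
      using x zero calculation by auto
    ultimately show "x \<in> ?f ` (UNIV - {(0, 0)})"
      by (auto intro!: image_eqI[of _ _ "(?s, ?r)"])
  qed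
  moreover have "inj_on ?f (UNIV - {(0, 0)})"
    using coefficients_unique by (auto intro!: inj_onI)
  ultimately show ?thesis
    by (simp add: bij_betw_def)
qed

lemma incident_pclass3_iff: "incident P (pclass3 UNIV u) \<longleftrightarrow> (\<forall>x\<in>P. dot3 u x = 0)"
proof -
  have "(\<forall>u'\<in>plane.orbit UNIV u. dot3 u' x = 0) \<longleftrightarrow> dot3 u x = 0" for x
    by (rule plane.orbit_all_iff[OF mult_inverse_closed_UNIV]) (simp add: dot3_scale3_left)
  then show ?thesis
    unfolding incident_def pclass3_eq_orbit by (auto simp: dot3_def split_def)
qed

lemma incident_pclass3_pclass3_iff: "incident (pclass3 UNIV v) (pclass3 UNIV u) \<longleftrightarrow> dot3 u v = 0"
  unfolding incident_pclass3_iff unfolding pclass3_eq_orbit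
  by (rule plane.orbit_all_iff[OF mult_inverse_closed_UNIV]) (simp add: dot3_scale3_right)

locale ternary_form =
  fixes A1 A2 A3 B12 B13 B23 :: "'a::field"
begin

definition Q :: "'a \<times> 'a \<times> 'a \<Rightarrow> 'a" where
  "Q = (\<lambda>(x1, x2, x3). A1 * x1 ^ 2 + A2 * x2 ^ 2 + A3 * x3 ^ 2 + B12 * x1 * x2 + B13 * x1 * x3 + B23 * x2 * x3)"

definition polar :: "'a \<times> 'a \<times> 'a \<Rightarrow> 'a \<times> 'a \<times> 'a \<Rightarrow> 'a" where
  "polar x y = Q (lincomb3 1 x 1 y) - Q x - Q y"

text \<open>The determinant of the Gram matrix M = [[2 A1, B12, B13], [B12, 2 A2, B23], [B13, B23, 2 A3]]
  of the polar form, and the quadratic form of -adj M.\<close>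

definition gram_det :: 'a where
  "gram_det = 2 * A1 * (4 * A2 * A3 - B23 ^ 2) - B12 * (2 * B12 * A3 - B23 * B13) + B13 * (B12 * B23 - 2 * A2 * B13)"

definition dual :: "'a \<times> 'a \<times> 'a \<Rightarrow> 'a" where
  "dual = ternary_form.Q (B23 ^ 2 - 4 * A2 * A3) (B13 ^ 2 - 4 * A1 * A3) (B12 ^ 2 - 4 * A1 * A2)
     (2 * (2 * A3 * B12 - B13 * B23)) (2 * (2 * A2 * B13 - B12 * B23)) (2 * (2 * A1 * B23 - B12 * B13))"

lemma Q_scale3: "Q (scale3 k x) = k ^ 2 * Q x"
  unfolding Q_def scale3_def split_def by (simp add: algebra_simps power2_eq_square)

lemma dual_scale3: "dual (scale3 k u) = k ^ 2 * dual u"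
  unfolding dual_def by (rule ternary_form.Q_scale3)

lemma Q_lincomb3: "Q (lincomb3 s w r v) = Q w * s ^ 2 + polar w v * s * r + Q v * r ^ 2"
  unfolding Q_def polar_def lincomb3_def split_def by (simp add: algebra_simps power2_eq_square)

lemma polar_discriminant: "polar w v ^ 2 - 4 * Q w * Q v = dual (cross3 w v)"
  unfolding Q_def polar_def lincomb3_def cross3_def dual_def ternary_form.Q_def split_def
  by simp Groebner_Basis.algebra

lemma gram_det_restriction:
  "ternary_form.gram_det (Q w) (Q v) (Q e) (polar w v) (polar w e) (polar v e) = dot3 (cross3 w v) e ^ 2 * gram_det"
  unfolding Q_def polar_def lincomb3_def cross3_def dot3_def ternary_form.gram_det_def gram_det_def split_def
  by simp Groebner_Basis.algebra

text \<open>Up to the normalisation by powers of 2, these are adj (adj M) = det M * M and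
  det (adj M) = (det M)^2.\<close>

lemma dual_dual:
  "ternary_form.dual (B23 ^ 2 - 4 * A2 * A3) (B13 ^ 2 - 4 * A1 * A3) (B12 ^ 2 - 4 * A1 * A2)
     (2 * (2 * A3 * B12 - B13 * B23)) (2 * (2 * A2 * B13 - B12 * B23)) (2 * (2 * A1 * B23 - B12 * B13)) x
   = - 8 * gram_det * Q x"
  unfolding ternary_form.dual_def ternary_form.Q_def gram_det_def split_def by simp Groebner_Basis.algebra

lemma gram_det_dual:
  "ternary_form.gram_det (B23 ^ 2 - 4 * A2 * A3) (B13 ^ 2 - 4 * A1 * A3) (B12 ^ 2 - 4 * A1 * A2)
     (2 * (2 * A3 * B12 - B13 * B23)) (2 * (2 * A2 * B13 - B12 * B23)) (2 * (2 * A1 * B23 - B12 * B13))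
   = - 8 * gram_det ^ 2"
  unfolding ternary_form.gram_det_def gram_det_def by Groebner_Basis.algebra

end

locale nondegenerate_ternary_form = ternary_form A1 A2 A3 B12 B13 B23
  for A1 A2 A3 B12 B13 B23 :: "'a::{finite,field}" +
  assumes two_nonzero: "(2::'a) \<noteq> 0" and gram_det_nonzero: "gram_det \<noteq> 0"
begin

lemma isotropic_pair_dependent:
  assumes "Q w = 0" "Q v = 0" "polar w v = 0"
  shows "cross3 w v = (0, 0, 0)"
proof (rule ccontr)
  assume "cross3 w v \<noteq> (0, 0, 0)"
  then obtain e where "dot3 (cross3 w v) e \<noteq> 0"
    using dot3_nonzero_exists by blast
  moreover have "ternary_form.gram_det 0 0 (Q e) 0 (polar w e) (polar v e) = 0"
    by (simp add: ternary_form.gram_det_def)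
  ultimately show False
    using gram_det_restriction[of w v e] assms gram_det_nonzero by simp
qed

lemma card_line_zeros:
  assumes u: "u \<noteq> (0, 0, 0)"
  shows "card {x. x \<noteq> (0, 0, 0) \<and> dot3 u x = 0 \<and> Q x = 0} = (card (UNIV :: 'a set) - 1) * num_sqrts (dual u)"
proof -
  obtain w v where wv: "cross3 w v = u"
    using cross3_surj by blast
  let ?f = "\<lambda>(s, r). lincomb3 s w r v"
  have bij: "bij_betw ?f {p \<in> UNIV - {(0, 0)}. Q (?f p) = 0} {x \<in> {x. x \<noteq> (0, 0, 0) \<and> dot3 u x = 0}. Q x = 0}"
    by (rule bij_betw_Collect[OF line_parametrization[OF wv u]]) simp
  have params: "{p \<in> UNIV - {(0, 0)}. Q (?f p) = 0}
      = {(s, r). (s, r) \<noteq> (0, 0) \<and> Q w * s ^ 2 + polar w v * s * r + Q v * r ^ 2 = 0}"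
    by (auto simp: Q_lincomb3)
  have points: "{x \<in> {x. x \<noteq> (0, 0, 0) \<and> dot3 u x = 0}. Q x = 0} = {x. x \<noteq> (0, 0, 0) \<and> dot3 u x = 0 \<and> Q x = 0}"
    by auto
  have "card {x. x \<noteq> (0, 0, 0) \<and> dot3 u x = 0 \<and> Q x = 0}
      = card {(s, r). (s, r) \<noteq> (0, 0) \<and> Q w * s ^ 2 + polar w v * s * r + Q v * r ^ 2 = 0}"
    using bij_betw_same_card[OF bij] unfolding params points ..
  also have "\<dots> = (card (UNIV :: 'a set) - 1) * num_sqrts (polar w v ^ 2 - 4 * Q w * Q v)"
    using isotropic_pair_dependent[of w v] wv u by (intro card_binary_form_zeros[OF two_nonzero]) auto
  finally show ?thesis
    by (simp add: polar_discriminant wv)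
qed

lemma card_conic_line_points:
  assumes u: "u \<noteq> (0, 0, 0)"
  shows "card {P \<in> proj_plane UNIV. \<forall>x\<in>P. Q x = 0 \<and> dot3 u x = 0} = num_sqrts (dual u)"
proof -
  have "card (UNIV - {0::'a}) * card {P \<in> proj_plane UNIV. \<forall>x\<in>P. Q x = 0 \<and> dot3 u x = 0}
      = card {x \<in> UNIV \<times> UNIV \<times> UNIV - {(0, 0, 0)}. Q x = 0 \<and> dot3 u x = 0}"
    by (rule card_proj_plane_points[OF mult_inverse_closed_UNIV]) (simp add: Q_scale3 dot3_scale3_right)
  also have "\<dots> = card {x. x \<noteq> (0, 0, 0) \<and> dot3 u x = 0 \<and> Q x = 0}"
    by (rule arg_cong[where f = card]) auto
  also have "\<dots> = card (UNIV - {0::'a}) * num_sqrts (dual u)"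
    using card_line_zeros[OF u] by (simp add: card_Diff_subset)
  finally have "card (UNIV - {0::'a}) * card {P \<in> proj_plane UNIV. \<forall>x\<in>P. Q x = 0 \<and> dot3 u x = 0}
      = card (UNIV - {0::'a}) * num_sqrts (dual u)" .
  moreover have "0 < card (UNIV - {0::'a})"
    by (rule card_nonzero_pos[OF mult_inverse_closed_UNIV]) simp
  ultimately show ?thesis
    by simp
qed

lemma dual_nondegenerate:
  "nondegenerate_ternary_form (B23 ^ 2 - 4 * A2 * A3) (B13 ^ 2 - 4 * A1 * A3) (B12 ^ 2 - 4 * A1 * A2)
     (2 * (2 * A3 * B12 - B13 * B23)) (2 * (2 * A2 * B13 - B12 * B23)) (2 * (2 * A1 * B23 - B12 * B13))"
proof
  have "(8::'a) = 2 * 2 * 2"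
    by simp
  then have "(8::'a) \<noteq> 0"
    using two_nonzero by (metis mult_eq_0_iff)
  then show "ternary_form.gram_det (B23 ^ 2 - 4 * A2 * A3) (B13 ^ 2 - 4 * A1 * A3) (B12 ^ 2 - 4 * A1 * A2)
     (2 * (2 * A3 * B12 - B13 * B23)) (2 * (2 * A2 * B13 - B12 * B23)) (2 * (2 * A1 * B23 - B12 * B13)) \<noteq> 0"
    unfolding gram_det_dual using gram_det_nonzero by simp
qed (rule two_nonzero)

lemma card_tangent_lines_through:
  assumes v: "v \<noteq> (0, 0, 0)"
  shows "card {L \<in> proj_plane UNIV. \<forall>u\<in>L. dual u = 0 \<and> dot3 u v = 0} = num_sqrts (- 8 * gram_det * Q v)"
proof -
  interpret dual_form: nondegenerate_ternary_form "B23 ^ 2 - 4 * A2 * A3" "B13 ^ 2 - 4 * A1 * A3"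
    "B12 ^ 2 - 4 * A1 * A2" "2 * (2 * A3 * B12 - B13 * B23)" "2 * (2 * A2 * B13 - B12 * B23)"
    "2 * (2 * A1 * B23 - B12 * B13)"
    by (rule dual_nondegenerate)
  show ?thesis
    using dual_form.card_conic_line_points[OF v]
    unfolding dual_dual dual_def[symmetric] by (simp add: dot3_commute[of v])
qed

end

section \<open>The quadratic extension\<close>

(* The library's finite_field_power_card_eq_same is stated for the sort finite_field,
   which a type variable of sort {finite, field} does not have. *)
lemma power_card_eq_same:
  fixes x :: "'a::{finite,field}"
  shows "x ^ card (UNIV :: 'a set) = x"
proof (cases "x = 0")
  case False
  let ?G = "\<lparr>carrier = UNIV - {0::'a}, mult = (*), one = 1\<rparr>"
  have "group ?G"
    by (rule groupI) (auto intro!: bexI[of _ "inverse _"])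
  then have "x [^]\<^bsub>?G\<^esub> order ?G = 1"
    using False by (simp add: group.pow_order_eq_1)
  moreover have "x [^]\<^bsub>?G\<^esub> n = x ^ n" for n :: nat
    by (induction n) auto
  moreover have "order ?G = card (UNIV :: 'a set) - 1"
    by (simp add: order_def card_Diff_subset)
  ultimately show ?thesis
    by (metis card_gt_0_iff finite_UNIV power_minus_mult UNIV_not_empty mult_1)
qed (simp add: finite_UNIV_card_ge_0)

locale quadratic_extension =
  fixes q :: nat and \<omega> eps :: "'a::{finite,field}"
  assumes q_prime_power: "\<exists>p k. prime p \<and> k > 0 \<and> q = p ^ k"
    and q_odd: "odd q"
    and card_UNIV: "card (UNIV::'a set) = q ^ 2"
    and \<omega>_in: "\<omega> \<in> subfield_q q"
    and \<omega>_nonsquare: "\<not> (\<exists>y \<in> subfield_q q. y ^ 2 = \<omega>)"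
    and eps_square: "eps ^ 2 = \<omega>"
begin

abbreviation Fq :: "'a set" where "Fq \<equiv> subfield_q q"

lemma q_is_CHAR_power: "\<exists>k>0. q = CHAR('a) ^ k"
proof -
  obtain p k where pk: "prime p" "k > 0" "q = p ^ k" using q_prime_power by blast
  have "prime CHAR('a)"
    by (simp add: finite_imp_CHAR_pos prime_CHAR_semidom)
  moreover have "CHAR('a) dvd p ^ (2 * k)"
    using CHAR_dvd_CARD[where 'a='a] card_UNIV pk by (simp add: power_mult mult.commute)
  ultimately have "CHAR('a) = p"
    using pk(1) prime_dvd_power primes_dvd_imp_eq by blast
  with pk show ?thesis by blast
qed

lemma frobenius_add: "(x + y) ^ q = x ^ q + (y::'a) ^ q"
  using q_is_CHAR_power by (auto intro: freshmans_dream' simp: finite_imp_CHAR_pos prime_CHAR_semidom)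

lemma frobenius_minus: "(- x) ^ q = - ((x::'a) ^ q)"
  using q_odd by simp

lemma frobenius_diff: "(x - y) ^ q = x ^ q - (y::'a) ^ q"
  using frobenius_add[of x "- y"] by (simp add: frobenius_minus)

lemma frobenius_frobenius: "((x::'a) ^ q) ^ q = x"
  using power_card_eq_same[of x] by (simp add: card_UNIV power2_eq_square power_mult)

lemma two_nonzero: "(2::'a) \<noteq> 0"
proof
  assume "(2::'a) = 0"
  then have "CHAR('a) dvd 2"
    by (metis of_nat_eq_0_iff_char_dvd of_nat_numeral)
  then have "CHAR('a) = 2"
    by (simp add: finite_imp_CHAR_pos prime_CHAR_semidom primes_dvd_imp_eq)
  then show False
    using q_is_CHAR_power q_odd by auto
qed

lemma Fq_iff: "x \<in> Fq \<longleftrightarrow> x ^ q = x"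
  by (simp add: subfield_q_def)

lemma Fq_add: "x \<in> Fq \<Longrightarrow> y \<in> Fq \<Longrightarrow> x + y \<in> Fq"
  by (simp add: Fq_iff frobenius_add)

lemma Fq_uminus: "x \<in> Fq \<Longrightarrow> - x \<in> Fq"
  by (simp add: Fq_iff frobenius_minus)

lemma Fq_diff: "x \<in> Fq \<Longrightarrow> y \<in> Fq \<Longrightarrow> x - y \<in> Fq"
  by (simp add: Fq_iff frobenius_diff)

lemma Fq_mult: "x \<in> Fq \<Longrightarrow> y \<in> Fq \<Longrightarrow> x * y \<in> Fq"
  by (simp add: Fq_iff power_mult_distrib)

lemma Fq_inverse: "x \<in> Fq \<Longrightarrow> inverse x \<in> Fq"
  by (simp add: Fq_iff power_inverse)

lemma Fq_divide: "x \<in> Fq \<Longrightarrow> y \<in> Fq \<Longrightarrow> x / y \<in> Fq"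
  by (simp add: divide_inverse Fq_mult Fq_inverse)

lemma Fq_power: "x \<in> Fq \<Longrightarrow> x ^ n \<in> Fq"
  unfolding Fq_iff by (metis power_mult mult.commute)

lemma Fq_0: "0 \<in> Fq"
  using q_odd by (simp add: Fq_iff zero_power odd_pos)

lemma Fq_1: "1 \<in> Fq"
  by (simp add: Fq_iff)

lemma Fq_of_nat: "of_nat n \<in> Fq"
  by (induction n) (simp_all add: Fq_0 Fq_1 Fq_add)

lemma Fq_numeral: "numeral n \<in> Fq"
  using Fq_of_nat[of "numeral n"] by simp

lemma eps_notin_Fq: "eps \<notin> Fq"
  using \<omega>_nonsquare eps_square by blast

lemma frobenius_eps: "eps ^ q = - eps"
proof -
  have "(eps ^ q) ^ 2 = eps ^ 2"
    using \<omega>_in eps_square by (metis Fq_iff power_mult mult.commute)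
  then have "eps ^ q = eps \<or> eps ^ q = - eps"
    by (simp add: power2_eq_iff)
  then show ?thesis using eps_notin_Fq Fq_iff by blast
qed

lemma Fq_coordinates_unique:
  assumes "z1 \<in> Fq" "z2 \<in> Fq" "w1 \<in> Fq" "w2 \<in> Fq" and "z1 + eps * z2 = w1 + eps * w2"
  shows "z1 = w1 \<and> z2 = w2"
proof (cases "z2 = w2")
  case False
  then have "eps = (z1 - w1) / (w2 - z2)"
    using assms(5) by (simp add: field_simps)
  moreover have "(z1 - w1) / (w2 - z2) \<in> Fq"
    using assms(1-4) by (intro Fq_divide Fq_diff)
  ultimately show ?thesis
    using eps_notin_Fq by simp
qed (use assms in simp)

lemma Fq_coordinates_exist: "\<exists>z1\<in>Fq. \<exists>z2\<in>Fq. z = z1 + eps * z2"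
proof -
  define z1 where "z1 = (z + z ^ q) / 2"
  define z2 where "z2 = (z - z ^ q) / (2 * eps)"
  have two: "(2::'a) ^ q = 2"
    using Fq_numeral Fq_iff by blast
  have eps: "eps \<noteq> 0"
    using eps_notin_Fq Fq_0 by blast
  have "z2 ^ q = (z ^ q - z) / (2 * - eps)"
    unfolding z2_def power_divide power_mult_distrib two frobenius_diff frobenius_frobenius frobenius_eps ..
  also have "\<dots> = z2"
    unfolding z2_def by (simp add: minus_divide_left)
  finally have "z2 \<in> Fq"
    unfolding Fq_iff .
  moreover have "z1 \<in> Fq"
    unfolding z1_def Fq_iff power_divide two frobenius_add frobenius_frobenius by (simp add: add.commute)
  moreover have "eps * z2 = (z - z ^ q) / 2"
    unfolding z2_def using eps by simp
  then have "z = z1 + eps * z2"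
    unfolding z1_def using two_nonzero by (simp add: field_simps)
  ultimately show ?thesis
    by blast
qed

lemma comp1_eq:
  assumes "z1 \<in> Fq" "z2 \<in> Fq"
  shows "comp1 q eps (z1 + eps * z2) = z1"
  unfolding comp1_def
proof (rule the_equality)
  show "w1 = z1" if "w1 \<in> Fq \<and> (\<exists>w2\<in>Fq. z1 + eps * z2 = w1 + eps * w2)" for w1
    using that assms Fq_coordinates_unique by metis
qed (use assms in blast)

lemma comp2_eq:
  assumes "z1 \<in> Fq" "z2 \<in> Fq"
  shows "comp2 q eps (z1 + eps * z2) = z2"
  unfolding comp2_def
proof (rule the_equality)
  show "w2 = z2" if "w2 \<in> Fq \<and> (\<exists>w1\<in>Fq. z1 + eps * z2 = w1 + eps * w2)" for w2
    using that assms Fq_coordinates_unique by metis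
qed (use assms in blast)

lemma
  shows comp1_in_Fq: "comp1 q eps z \<in> Fq"
    and comp2_in_Fq: "comp2 q eps z \<in> Fq"
    and comp_decomposition: "comp1 q eps z + eps * comp2 q eps z = z"
proof -
  obtain z1 z2 where "z1 \<in> Fq" "z2 \<in> Fq" "z = z1 + eps * z2"
    using Fq_coordinates_exist by blast
  then show "comp1 q eps z \<in> Fq" "comp2 q eps z \<in> Fq" "comp1 q eps z + eps * comp2 q eps z = z"
    by (simp_all add: comp1_eq comp2_eq)
qed

lemma in_Fq_iff_comp2_eq_0: "z \<in> Fq \<longleftrightarrow> comp2 q eps z = 0"
proof
  assume "z \<in> Fq"
  then show "comp2 q eps z = 0"
    using comp2_eq[of z 0] Fq_0 by simp
next
  assume "comp2 q eps z = 0"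
  then show "z \<in> Fq"
    using comp_decomposition[of z] comp1_in_Fq[of z] by simp
qed

lemma frobenius_conj:
  assumes "z1 \<in> Fq" "z2 \<in> Fq"
  shows "(z1 + eps * z2) ^ q = z1 - eps * z2"
proof -
  have "(z1 + eps * z2) ^ q = z1 ^ q + eps ^ q * z2 ^ q"
    by (simp only: frobenius_add power_mult_distrib)
  also have "\<dots> = z1 - eps * z2"
    using assms by (simp add: Fq_iff frobenius_eps)
  finally show ?thesis .
qed

lemma Fq_mult_inverse_closed: "mult_inverse_closed Fq"
  unfolding mult_inverse_closed_def using Fq_1 Fq_mult Fq_inverse by blast

lemma comp2_mult_conj:
  assumes "z1 \<in> Fq" "z2 \<in> Fq" "w1 \<in> Fq" "w2 \<in> Fq"
  shows "comp2 q eps ((z1 + eps * z2) * (w1 - eps * w2)) = z2 * w1 - z1 * w2"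
proof -
  have "(z1 + eps * z2) * (w1 - eps * w2) = (z1 * w1 - \<omega> * z2 * w2) + eps * (z2 * w1 - z1 * w2)"
    using eps_square by (simp add: algebra_simps power2_eq_square)
  then show ?thesis
    using assms \<omega>_in by (simp add: comp2_eq Fq_diff Fq_mult)
qed

lemma divide_in_Fq_iff:
  assumes "m \<noteq> 0"
  shows "n / m \<in> Fq \<longleftrightarrow> n * m ^ q \<in> Fq"
proof -
  have norm: "m * m ^ q \<in> Fq" "m * m ^ q \<noteq> 0"
    using assms unfolding Fq_iff by (simp_all add: power_mult_distrib frobenius_frobenius mult.commute)
  have "n * m ^ q = n / m * (m * m ^ q)" "n / m = n * m ^ q / (m * m ^ q)"
    using assms by simp_all
  then show ?thesis
    using norm Fq_mult Fq_divide by metis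
qed

end

section \<open>The conic and the cubic surface\<close>

lemma card_minus_two_disjoint_filters:
  assumes "finite A" and "\<And>x. x \<in> A \<Longrightarrow> \<not> (P x \<and> R x)"
  shows "real (card A) - real (card {x \<in> A. P x}) - real (card {x \<in> A. R x})
    = real (card {x \<in> A. \<not> P x \<and> \<not> R x})"
proof -
  have "card ({x \<in> A. P x} \<union> {x \<in> A. R x}) = card {x \<in> A. P x} + card {x \<in> A. R x}"
    using assms by (intro card_Un_disjoint) auto
  moreover have "card A = card ({x \<in> A. P x} \<union> {x \<in> A. R x}) + card {x \<in> A. \<not> P x \<and> \<not> R x}"
  proof -
    have "A = ({x \<in> A. P x} \<union> {x \<in> A. R x}) \<union> {x \<in> A. \<not> P x \<and> \<not> R x}"
      by blast
    moreover have "card (({x \<in> A. P x} \<union> {x \<in> A. R x}) \<union> {x \<in> A. \<not> P x \<and> \<not> R x})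
        = card ({x \<in> A. P x} \<union> {x \<in> A. R x}) + card {x \<in> A. \<not> P x \<and> \<not> R x}"
      using assms(1) by (intro card_Un_disjoint) auto
    ultimately show ?thesis
      by simp
  qed
  ultimately show ?thesis
    by simp
qed

lemma surface_poly_homogeneous:
  "surface_poly q eps \<omega> a b c d e (k * t1, k * t2, k * X, k * Z) = k ^ 3 * surface_poly q eps \<omega> a b c d e (t1, t2, X, Z)"
  unfolding surface_poly_def Let_def by (simp add: algebra_simps power2_eq_square power3_eq_cube)

lemma surface_poly_scale4: "surface_poly q eps \<omega> a b c d e (scale4 k v) = k ^ 3 * surface_poly q eps \<omega> a b c d e v"
  by (cases v) (simp add: scale4_def surface_poly_homogeneous)

locale extension_conic = quadratic_extension q \<omega> eps for q and \<omega> eps :: "'a::{finite,field}" +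
  fixes a b c d e :: 'a
  assumes nonsingular: "conic_nonsingular a b c d e"
    and d_eq_1: "d = 1"
    and b_notin_Fq: "b \<notin> subfield_q q"
    and discriminant_square: "\<exists>s. s \<noteq> 0 \<and> s ^ 2 = - b * c * d + a * d ^ 2 + b ^ 2 * e"
begin

sublocale conic: nondegenerate_ternary_form a 0 e b c d
proof
  show "ternary_form.gram_det a 0 e b c d \<noteq> 0"
    using nonsingular unfolding conic_nonsingular_def ternary_form.gram_det_def
    by (simp add: algebra_simps power2_eq_square)
qed (rule two_nonzero)

lemma conic_form_eq_Q: "conic_form a b c d e = conic.Q"
  unfolding conic_form_def conic.Q_def by (simp add: fun_eq_iff algebra_simps)

lemma tangent_line_iff:
  assumes u: "u \<noteq> (0, 0, 0)"
  shows "tangent_line a b c d e (pclass3 UNIV u) \<longleftrightarrow> conic.dual u = 0"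
proof -
  have "{P \<in> conic_points a b c d e. incident P (pclass3 UNIV u)}
      = {P \<in> proj_plane UNIV. \<forall>x\<in>P. conic.Q x = 0 \<and> dot3 u x = 0}"
    unfolding conic_points_def conic_form_eq_Q incident_pclass3_iff by blast
  then have "card {P \<in> conic_points a b c d e. incident P (pclass3 UNIV u)} = num_sqrts (conic.dual u)"
    using conic.card_conic_line_points[OF u] by simp
  moreover have "pclass3 UNIV u \<in> proj_plane UNIV"
    using u by (simp add: pclass3_in_proj_plane)
  ultimately show ?thesis
    unfolding tangent_line_def using num_sqrts_eq_1_iff[OF two_nonzero] by simp
qed

lemma card_tangents_through:
  assumes v: "v \<noteq> (0, 0, 0)"
  shows "card {L. tangent_line a b c d e L \<and> incident (pclass3 UNIV v) L} = num_sqrts (conic.Q v)"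
proof -
  have "tangent_line a b c d e L \<and> incident (pclass3 UNIV v) L
      \<longleftrightarrow> L \<in> proj_plane UNIV \<and> (\<forall>u\<in>L. conic.dual u = 0 \<and> dot3 u v = 0)" for L
  proof (cases "L \<in> proj_plane UNIV")
    case True
    then obtain u where u: "u \<noteq> (0, 0, 0)" "L = pclass3 UNIV u"
      by (elim proj_planeE) blast
    have "(\<forall>u'\<in>L. conic.dual u' = 0 \<and> dot3 u' v = 0) \<longleftrightarrow> conic.dual u = 0 \<and> dot3 u v = 0"
      unfolding u(2) pclass3_eq_orbit
      by (rule plane.orbit_all_iff[OF mult_inverse_closed_UNIV]) (simp add: conic.dual_scale3 dot3_scale3_left)
    then show ?thesis
      using True u tangent_line_iff[OF u(1)] incident_pclass3_pclass3_iff[of v u] by simp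
  qed (simp add: tangent_line_def)
  then have card_eq: "card {L. tangent_line a b c d e L \<and> incident (pclass3 UNIV v) L}
      = num_sqrts (- 8 * conic.gram_det * conic.Q v)"
    using conic.card_tangent_lines_through[OF v] by simp
  obtain s where s: "s \<noteq> 0" "s ^ 2 = - b * c * d + a * d ^ 2 + b ^ 2 * e"
    using discriminant_square by blast
  have "- 8 * conic.gram_det = 16 * (- b * c * d + a * d ^ 2 + b ^ 2 * e)"
    unfolding conic.gram_det_def using d_eq_1 by (simp add: algebra_simps power2_eq_square)
  also have "\<dots> = (4 * s) ^ 2"
    using s(2) by (simp add: power_mult_distrib)
  finally have square: "- 8 * conic.gram_det = (4 * s) ^ 2" .
  have "4 * s \<noteq> 0"
    using s(1) two_nonzero by (metis mult_2 mult_eq_0_iff numeral_Bit0)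
  then show ?thesis
    unfolding card_eq square by (rule num_sqrts_mult_square)
qed

lemma num_sqrts_Q_scale3: "k \<noteq> 0 \<Longrightarrow> num_sqrts (conic.Q (scale3 k v)) = num_sqrts (conic.Q v)"
  by (simp add: conic.Q_scale3 num_sqrts_mult_square)

lemma E_q_eq_card_rational_points:
  "E_q q a b c d e = card {P \<in> proj_plane Fq. \<forall>v\<in>P. num_sqrts (conic.Q v) = 2}"
proof -
  have "card {L. tangent_line a b c d e L \<and> incident P L} = 2 \<longleftrightarrow> (\<forall>v\<in>P. num_sqrts (conic.Q v) = 2)"
    if P: "P \<in> proj_plane UNIV" for P
  proof -
    obtain v where v: "v \<noteq> (0, 0, 0)" "P = pclass3 UNIV v"
      using P by (elim proj_planeE) blast
    show ?thesis
      unfolding v(2) card_tangents_through[OF v(1)] unfolding pclass3_eq_orbit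
      by (rule plane.orbit_all_iff[OF mult_inverse_closed_UNIV, symmetric]) (simp add: num_sqrts_Q_scale3)
  qed
  then have "E_q q a b c d e
      = card {P \<in> proj_plane UNIV. (\<exists>v\<in>P. v \<in> Fq \<times> Fq \<times> Fq) \<and> (\<forall>v\<in>P. num_sqrts (conic.Q v) = 2)}"
    unfolding E_q_def by (intro arg_cong[where f = card] Collect_cong) blast
  also have "\<dots> = card {P \<in> proj_plane Fq. \<forall>v\<in>P. num_sqrts (conic.Q v) = 2}"
    by (rule card_rational_points[OF Fq_mult_inverse_closed]) (simp add: num_sqrts_Q_scale3)
  finally show ?thesis .
qed

lemma card_E_q:
  "card (Fq - {0}) * E_q q a b c d e = card {v \<in> Fq \<times> Fq \<times> Fq - {(0, 0, 0)}. num_sqrts (conic.Q v) = 2}"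
  unfolding E_q_eq_card_rational_points
  by (rule card_proj_plane_points[OF Fq_mult_inverse_closed]) (simp add: num_sqrts_Q_scale3)

lemma surface_poly_eq_comp2:
  assumes t: "t1 \<in> Fq" "t2 \<in> Fq" and XZ: "X \<in> Fq" "Z \<in> Fq"
  shows "surface_poly q eps \<omega> a b c d e (t1, t2, X, Z)
    = comp2 q eps (((t1 + eps * t2) ^ 2 - (a * X ^ 2 + c * X * Z + e * Z ^ 2)) * (b * X + Z) ^ q)"
proof -
  define a1 a2 b1 b2 c1 c2 e1 e2 where "a1 = comp1 q eps a" "a2 = comp2 q eps a"
    "b1 = comp1 q eps b" "b2 = comp2 q eps b" "c1 = comp1 q eps c" "c2 = comp2 q eps c"
    "e1 = comp1 q eps e" "e2 = comp2 q eps e"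
  note components = a1_a2_b1_b2_c1_c2_e1_e2_def
  have in_Fq: "a1 \<in> Fq" "a2 \<in> Fq" "b1 \<in> Fq" "b2 \<in> Fq" "c1 \<in> Fq" "c2 \<in> Fq" "e1 \<in> Fq" "e2 \<in> Fq"
    unfolding components by (rule comp1_in_Fq comp2_in_Fq)+
  have decomposition: "a = a1 + eps * a2" "b = b1 + eps * b2" "c = c1 + eps * c2" "e = e1 + eps * e2"
    unfolding components by (simp_all add: comp_decomposition)
  have "(t1 + eps * t2) ^ 2 - (a * X ^ 2 + c * X * Z + e * Z ^ 2)
      = (t1 ^ 2 + \<omega> * t2 ^ 2 - (a1 * X ^ 2 + c1 * X * Z + e1 * Z ^ 2))
        + eps * (2 * t1 * t2 - (a2 * X ^ 2 + c2 * X * Z + e2 * Z ^ 2))"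
    by (simp add: decomposition eps_square[symmetric] algebra_simps power2_eq_square)
  moreover have "(b * X + Z) ^ q = (b1 * X + Z) - eps * (b2 * X)"
  proof -
    have "b * X + Z = (b1 * X + Z) + eps * (b2 * X)"
      by (simp add: decomposition algebra_simps)
    moreover have "b1 * X + Z \<in> Fq" "b2 * X \<in> Fq"
      using in_Fq XZ by (simp_all add: Fq_add Fq_mult)
    ultimately show ?thesis
      by (simp only: frobenius_conj)
  qed
  ultimately have "comp2 q eps (((t1 + eps * t2) ^ 2 - (a * X ^ 2 + c * X * Z + e * Z ^ 2)) * (b * X + Z) ^ q)
      = (2 * t1 * t2 - (a2 * X ^ 2 + c2 * X * Z + e2 * Z ^ 2)) * (b1 * X + Z)
        - (t1 ^ 2 + \<omega> * t2 ^ 2 - (a1 * X ^ 2 + c1 * X * Z + e1 * Z ^ 2)) * (b2 * X)"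
    using in_Fq t XZ \<omega>_in
    by (simp add: comp2_mult_conj Fq_add Fq_diff Fq_mult Fq_power Fq_numeral)
  also have "\<dots> = surface_poly q eps \<omega> a b c d e (t1, t2, X, Z)"
    using comp1_eq[OF Fq_1 Fq_0] comp2_eq[OF Fq_1 Fq_0] d_eq_1
    unfolding surface_poly_def Let_def components[symmetric]
    by (simp add: algebra_simps power2_eq_square power3_eq_cube)
  finally show ?thesis ..
qed

lemma b_X_plus_Z_nonzero:
  assumes "X \<in> Fq" "Z \<in> Fq" "(X, Z) \<noteq> (0, 0)"
  shows "b * X + Z \<noteq> 0"
proof
  assume zero: "b * X + Z = 0"
  then have "X \<noteq> 0"
    using assms(3) by auto
  with zero have "b = - Z / X"
    by (simp add: field_simps add_eq_0_iff2)
  then show False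
    using assms b_notin_Fq by (simp add: Fq_uminus Fq_divide)
qed

definition Y_coordinate :: "'a \<Rightarrow> 'a \<Rightarrow> 'a \<Rightarrow> 'a" where
  "Y_coordinate s X Z = (s ^ 2 - (a * X ^ 2 + c * X * Z + e * Z ^ 2)) / (b * X + Z)"

lemma conic_Q_eq_square_iff:
  assumes "b * X + Z \<noteq> 0"
  shows "conic.Q (X, Y, Z) = s ^ 2 \<longleftrightarrow> Y = Y_coordinate s X Z"
proof -
  have "conic.Q (X, Y, Z) = Y * (b * X + Z) + (a * X ^ 2 + c * X * Z + e * Z ^ 2)"
    using d_eq_1 by (simp add: ternary_form.Q_def algebra_simps power2_eq_square)
  then show ?thesis
    using assms unfolding Y_coordinate_def by (auto simp: field_simps)
qed

lemma surface_poly_eq_0_iff: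
  assumes "t1 \<in> Fq" "t2 \<in> Fq" "X \<in> Fq" "Z \<in> Fq" "(X, Z) \<noteq> (0, 0)"
  shows "surface_poly q eps \<omega> a b c d e (t1, t2, X, Z) = 0 \<longleftrightarrow> Y_coordinate (t1 + eps * t2) X Z \<in> Fq"
  unfolding surface_poly_eq_comp2[OF assms(1-4)] Y_coordinate_def
    divide_in_Fq_iff[OF b_X_plus_Z_nonzero[OF assms(3-5)]]
  by (rule in_Fq_iff_comp2_eq_0[symmetric])

definition surface_off_lines :: "'a \<times> 'a \<times> 'a \<times> 'a \<Rightarrow> bool" where
  "surface_off_lines = (\<lambda>(t1, t2, X, Z).
     surface_poly q eps \<omega> a b c d e (t1, t2, X, Z) = 0 \<and> (t1, t2) \<noteq> (0, 0) \<and> (X, Z) \<noteq> (0, 0))"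

lemma surface_point_to_conic:
  assumes "t1 \<in> Fq" "t2 \<in> Fq" "X \<in> Fq" "Z \<in> Fq" and off: "surface_off_lines (t1, t2, X, Z)"
  shows "(X, Y_coordinate (t1 + eps * t2) X Z, Z) \<in> Fq \<times> Fq \<times> Fq - {(0, 0, 0)}"
    and "conic.Q (X, Y_coordinate (t1 + eps * t2) X Z, Z) = (t1 + eps * t2) ^ 2"
    and "num_sqrts (conic.Q (X, Y_coordinate (t1 + eps * t2) X Z, Z)) = 2"
proof -
  have XZ: "(X, Z) \<noteq> (0, 0)"
    using off by (simp add: surface_off_lines_def)
  show "(X, Y_coordinate (t1 + eps * t2) X Z, Z) \<in> Fq \<times> Fq \<times> Fq - {(0, 0, 0)}"
    using off surface_poly_eq_0_iff[OF assms(1-4) XZ] assms(3,4) XZ by (simp add: surface_off_lines_def)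
  show Q: "conic.Q (X, Y_coordinate (t1 + eps * t2) X Z, Z) = (t1 + eps * t2) ^ 2"
    using conic_Q_eq_square_iff[OF b_X_plus_Z_nonzero[OF assms(3,4) XZ]] by simp
  have "t1 + eps * t2 \<noteq> 0"
    using off Fq_coordinates_unique[OF assms(1,2) Fq_0 Fq_0] by (auto simp: surface_off_lines_def)
  then show "num_sqrts (conic.Q (X, Y_coordinate (t1 + eps * t2) X Z, Z)) = 2"
    unfolding Q num_sqrts_eq_2_iff[OF two_nonzero] by blast
qed

lemma conic_point_to_surface:
  assumes w: "(X, Y, Z) \<in> Fq \<times> Fq \<times> Fq" "num_sqrts (conic.Q (X, Y, Z)) = 2" and s: "s ^ 2 = conic.Q (X, Y, Z)"
  shows "surface_off_lines (comp1 q eps s, comp2 q eps s, X, Z)" and "Y_coordinate s X Z = Y"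
proof -
  have XZ_in: "X \<in> Fq" "Z \<in> Fq"
    using w(1) by simp_all
  have "conic.Q (X, Y, Z) \<noteq> 0"
    using w(2) num_sqrts_eq_1_iff[OF two_nonzero, of 0] by auto
  then have XZ: "(X, Z) \<noteq> (0, 0)" and "s \<noteq> 0"
    using s by (auto simp: ternary_form.Q_def)
  then have t: "(comp1 q eps s, comp2 q eps s) \<noteq> (0, 0)"
    using comp_decomposition[of s] by auto
  show Y: "Y_coordinate s X Z = Y"
    using conic_Q_eq_square_iff[OF b_X_plus_Z_nonzero[OF XZ_in XZ], of Y s] s by simp
  have "surface_poly q eps \<omega> a b c d e (comp1 q eps s, comp2 q eps s, X, Z) = 0"
    using surface_poly_eq_0_iff[OF comp1_in_Fq comp2_in_Fq XZ_in XZ] Y w(1) by (simp add: comp_decomposition)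
  then show "surface_off_lines (comp1 q eps s, comp2 q eps s, X, Z)"
    unfolding surface_off_lines_def using t XZ by simp
qed

lemma card_surface_off_lines:
  "card {v \<in> Fq \<times> Fq \<times> Fq \<times> Fq. surface_off_lines v}
    = 2 * card {w \<in> Fq \<times> Fq \<times> Fq - {(0, 0, 0)}. num_sqrts (conic.Q w) = 2}"
proof -
  let ?S = "{v \<in> Fq \<times> Fq \<times> Fq \<times> Fq. surface_off_lines v}"
  let ?W = "{w \<in> Fq \<times> Fq \<times> Fq - {(0, 0, 0)}. num_sqrts (conic.Q w) = 2}"
  define f where "f = (\<lambda>(t1, t2, X, Z). ((X, Y_coordinate (t1 + eps * t2) X Z, Z), t1 + eps * t2))"
  define g :: "('a \<times> 'a \<times> 'a) \<times> 'a \<Rightarrow> 'a \<times> 'a \<times> 'a \<times> 'a"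
    where "g = (\<lambda>((X, Y, Z), s). (comp1 q eps s, comp2 q eps s, X, Z))"
  have "bij_betw f ?S (SIGMA w:?W. {s. s ^ 2 = conic.Q w})"
  proof (rule bij_betwI[where g = g])
    show "f \<in> ?S \<rightarrow> (SIGMA w:?W. {s. s ^ 2 = conic.Q w})"
      using surface_point_to_conic by (auto simp: f_def)
    show "g \<in> (SIGMA w:?W. {s. s ^ 2 = conic.Q w}) \<rightarrow> ?S"
      using conic_point_to_surface(1) by (auto simp: g_def comp1_in_Fq comp2_in_Fq)
    show "g (f v) = v" if "v \<in> ?S" for v
      using that by (auto simp: f_def g_def comp1_eq comp2_eq)
    show "f (g p) = p" if "p \<in> (SIGMA w:?W. {s. s ^ 2 = conic.Q w})" for p
      using that conic_point_to_surface(2) by (auto simp: f_def g_def comp_decomposition)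
  qed
  then have "card ?S = card (SIGMA w:?W. {s. s ^ 2 = conic.Q w})"
    by (rule bij_betw_same_card)
  also have "\<dots> = (\<Sum>w\<in>?W. num_sqrts (conic.Q w))"
    unfolding num_sqrts_def by (rule card_SigmaI) simp_all
  also have "\<dots> = 2 * card ?W"
    by simp
  finally show ?thesis .
qed

lemma surface_off_lines_scale4: "k \<noteq> 0 \<Longrightarrow> surface_off_lines (scale4 k v) \<longleftrightarrow> surface_off_lines v"
  by (cases v) (simp add: surface_off_lines_def surface_poly_homogeneous scale4_def)

lemma card_surface_points_off_lines:
  "real (card (surface_points q eps \<omega> a b c d e))
     - real (card {P \<in> surface_points q eps \<omega> a b c d e. \<forall>v\<in>P. fst v = 0 \<and> fst (snd v) = 0})
     - real (card {P \<in> surface_points q eps \<omega> a b c d e. \<forall>v\<in>P. fst (snd (snd v)) = 0 \<and> snd (snd (snd v)) = 0})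
   = real (card {P \<in> proj_space3 Fq. \<forall>v\<in>P. surface_off_lines v})"
proof -
  have orbit_iff: "(\<forall>w\<in>space.orbit Fq v. \<phi> w) \<longleftrightarrow> \<phi> v"
    if "\<And>k v. k \<noteq> 0 \<Longrightarrow> \<phi> (scale4 k v) \<longleftrightarrow> \<phi> v" for \<phi> and v :: "'a \<times> 'a \<times> 'a \<times> 'a"
    using space.orbit_all_iff[OF Fq_mult_inverse_closed] that by blast
  have T: "(\<forall>w\<in>space.orbit Fq v. fst w = 0 \<and> fst (snd w) = 0) \<longleftrightarrow> fst v = 0 \<and> fst (snd v) = 0" for v
    by (rule orbit_iff) (simp add: scale4_def)
  have XZ: "(\<forall>w\<in>space.orbit Fq v. fst (snd (snd w)) = 0 \<and> snd (snd (snd w)) = 0)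
      \<longleftrightarrow> fst (snd (snd v)) = 0 \<and> snd (snd (snd v)) = 0" for v
    by (rule orbit_iff) (simp add: scale4_def)
  have S: "(\<forall>w\<in>space.orbit Fq v. surface_poly q eps \<omega> a b c d e w = 0) \<longleftrightarrow> surface_poly q eps \<omega> a b c d e v = 0" for v
    by (rule orbit_iff) (simp add: surface_poly_scale4)
  have off: "(\<forall>w\<in>space.orbit Fq v. surface_off_lines w) \<longleftrightarrow> surface_off_lines v" for v
    by (rule orbit_iff) (rule surface_off_lines_scale4)
  have "P \<in> surface_points q eps \<omega> a b c d e
        \<and> \<not> (\<forall>v\<in>P. fst v = 0 \<and> fst (snd v) = 0) \<and> \<not> (\<forall>v\<in>P. fst (snd (snd v)) = 0 \<and> snd (snd (snd v)) = 0)
      \<longleftrightarrow> P \<in> proj_space3 Fq \<and> (\<forall>v\<in>P. surface_off_lines v)" for P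
  proof (cases "P \<in> proj_space3 Fq")
    case True
    then obtain v where "P = space.orbit Fq v"
      unfolding pclass4_eq_orbit[symmetric] by (elim proj_space3E) blast
    then show ?thesis
      using True T[of v] XZ[of v] S[of v] off[of v]
      by (cases v) (simp add: surface_points_def surface_off_lines_def)
  qed (simp add: surface_points_def)
  moreover have "\<not> ((\<forall>v\<in>P. fst v = 0 \<and> fst (snd v) = 0) \<and> (\<forall>v\<in>P. fst (snd (snd v)) = 0 \<and> snd (snd (snd v)) = 0))"
    if P: "P \<in> surface_points q eps \<omega> a b c d e" for P
  proof
    obtain v where v: "v \<noteq> (0, 0, 0, 0)" "P = space.orbit Fq v"
      using P unfolding surface_points_def pclass4_eq_orbit[symmetric] by (elim CollectE conjE proj_space3E) blast
    assume "(\<forall>v\<in>P. fst v = 0 \<and> fst (snd v) = 0) \<and> (\<forall>v\<in>P. fst (snd (snd v)) = 0 \<and> snd (snd (snd v)) = 0)"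
    moreover have "v \<in> P"
      using v(2) space.orbit_self[OF Fq_mult_inverse_closed] by simp
    ultimately have "fst v = 0" "fst (snd v) = 0" "fst (snd (snd v)) = 0" "snd (snd (snd v)) = 0"
      by blast+
    then show False
      using v(1) by (simp add: prod_eq_iff)
  qed
  ultimately show ?thesis
    by (subst card_minus_two_disjoint_filters) (simp_all add: finite_subset[OF subset_UNIV])
qed

theorem E_q_eq_half_surface_count:
  "real (E_q q a b c d e) =
    (real (card (surface_points q eps \<omega> a b c d e))
     - real (card {P \<in> surface_points q eps \<omega> a b c d e. \<forall>v\<in>P. fst v = 0 \<and> fst (snd v) = 0})
     - real (card {P \<in> surface_points q eps \<omega> a b c d e.
                    \<forall>v\<in>P. fst (snd (snd v)) = 0 \<and> snd (snd (snd v)) = 0})) / 2"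
proof -
  let ?N = "card (Fq - {0})"
  have "?N * card {P \<in> proj_space3 Fq. \<forall>v\<in>P. surface_off_lines v}
      = card {v \<in> Fq \<times> Fq \<times> Fq \<times> Fq - {(0, 0, 0, 0)}. surface_off_lines v}"
    by (rule card_proj_space3_points[OF Fq_mult_inverse_closed]) (simp add: surface_off_lines_scale4)
  also have "\<dots> = card {v \<in> Fq \<times> Fq \<times> Fq \<times> Fq. surface_off_lines v}"
    by (rule arg_cong[where f = card]) (auto simp: surface_off_lines_def)
  also have "\<dots> = ?N * (2 * E_q q a b c d e)"
    unfolding card_surface_off_lines card_E_q[symmetric] by simp
  finally have "?N * card {P \<in> proj_space3 Fq. \<forall>v\<in>P. surface_off_lines v} = ?N * (2 * E_q q a b c d e)" .
  then have "card {P \<in> proj_space3 Fq. \<forall>v\<in>P. surface_off_lines v} = 2 * E_q q a b c d e"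
    by (simp only: nat_mult_eq_cancel1[OF card_nonzero_pos[OF Fq_mult_inverse_closed finite]])
  then show ?thesis
    unfolding card_surface_points_off_lines by simp
qed

end

theorem mainTheorem7:
  fixes q :: nat and \<omega> eps a b c d e :: "'a::{finite,field}"
  assumes q_pp: "\<exists>p k. prime p \<and> k > 0 \<and> q = p ^ k"
    and q_odd: "odd q"
    and card: "card (UNIV::'a set) = q ^ 2"
    and \<omega>_in: "\<omega> \<in> subfield_q q"
    and \<omega>_nonsq: "\<not> (\<exists>y \<in> subfield_q q. y ^ 2 = \<omega>)"
    and eps: "eps ^ 2 = \<omega>"
    and nonsing: "conic_nonsingular a b c d e"
    and d1: "d = 1"
    and b_notin: "b \<notin> subfield_q q"
    and sq: "\<exists>s. s \<noteq> 0 \<and> s ^ 2 = - b * c * d + a * d ^ 2 + b ^ 2 * e"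
  shows "real (E_q q a b c d e) =
    (real (card (surface_points q eps \<omega> a b c d e))
     - real (card {P \<in> surface_points q eps \<omega> a b c d e.
                    \<forall>v\<in>P. fst v = 0 \<and> fst (snd v) = 0})
     - real (card {P \<in> surface_points q eps \<omega> a b c d e.
                    \<forall>v\<in>P. fst (snd (snd v)) = 0 \<and> snd (snd (snd v)) = 0})) / 2"
proof -
  interpret extension_conic q \<omega> eps a b c d e
    using assms by unfold_locales
  show ?thesis
    by (rule E_q_eq_half_surface_count)
qed

end
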